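(* Let $k\ge 2$, let $G$ be a finite simple graph with a closed neighborhood balanced $k$-coloring $c$, and let $z\in V(G)$ with $c(z)=k$. Let $G'$ be obtained from $G$ by a $(3k-2)$-vertex addition at $z$, with the coloring $c'$ extending $c$ described below. Then $c'$ is a closed neighborhood balanced $k$-coloring of $G'$, and compared with $c$ on $G$, $c'$ has exactly one additional vertex of color $k$ and exactly three additional vertices of each color $1,\dots,k-1$.
   Context: For a vertex $v$, $N[v]=\{v\}\cup\{u : uv\in E(G)\}$. A closed neighborhood balanced $k$-coloring of $G$ is a map $c: V(G)\to\{1,\dots,k\}$ such that for every vertex $v$ the numbers $|\{u\in N[v] : c(u)=i\}|$, $i=1,\dots,k$, are all equal. A $(3k-2)$-vertex addition at $z$ (where $c(z)=k$): add new vertices $u_1,\dots,u_k$, each adjacent to $z$; for each $1\le i\le k-1$, $u_i$ is adjacent to $u_{i+1},\dots,u_{k-1}$; add new vertices $v_1,\dots,v_{k-1}$ and $v_1',\dots,v_{k-1}'$, all adjacent to $u_k$; for each $1\le i\le k-2$, $v_i$ is adjacent to $v_{i+1},\dots,v_{k-1}$ and $v_i'$ is adjacent to $v_{i+1}',\dots,v_{k-1}'$; there are no other new edges. The coloring $c'$ agrees with $c$ on $V(G)$, gives $u_i$ color $i$ ($1\le i\le k$), and gives both $v_i$ and $v_i'$ color $i$ ($1\le i\le k-1$). *)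

theory Defs
  imports Main
begin

definition simple_graph :: "'a set \<Rightarrow> ('a \<Rightarrow> 'a \<Rightarrow> bool) \<Rightarrow> bool" where
  "simple_graph V E \<longleftrightarrow> finite V \<and> (\<forall>u v. E u v \<longrightarrow> u \<in> V \<and> v \<in> V)
     \<and> (\<forall>u v. E u v \<longrightarrow> E v u) \<and> (\<forall>v. \<not> E v v)"

definition closed_nbhd :: "('a \<Rightarrow> 'a \<Rightarrow> bool) \<Rightarrow> 'a \<Rightarrow> 'a set" where
  "closed_nbhd E v = insert v {u. E v u}"

definition cnb_coloring :: "'a set \<Rightarrow> ('a \<Rightarrow> 'a \<Rightarrow> bool) \<Rightarrow> nat \<Rightarrow> ('a \<Rightarrow> nat) \<Rightarrow> bool" where
  "cnb_coloring V E k c \<longleftrightarrow> (\<forall>v\<in>V. c v \<in> {1..k}) \<and>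
     (\<forall>v\<in>V. \<forall>i\<in>{1..k}. \<forall>j\<in>{1..k}.
        card {u \<in> closed_nbhd E v. c u = i} = card {u \<in> closed_nbhd E v. c u = j})"

text \<open>New vertices of the (3k-2)-vertex addition: U i = u_i, W i = v_i, W' i = v_i'.\<close>
datatype newv = U nat | W nat | W' nat

definition add_vertices :: "nat \<Rightarrow> 'a set \<Rightarrow> ('a + newv) set" where
  "add_vertices k V = Inl ` V \<union> Inr ` (U ` {1..k} \<union> W ` {1..k-1} \<union> W' ` {1..k-1})"

definition new_edge :: "nat \<Rightarrow> 'a \<Rightarrow> ('a + newv) \<Rightarrow> ('a + newv) \<Rightarrow> bool" where
  "new_edge k z x y \<longleftrightarrow>
     (\<exists>i\<in>{1..k}. x = Inl z \<and> y = Inr (U i)) \<or>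
     (\<exists>i j. 1 \<le> i \<and> i < j \<and> j \<le> k - 1 \<and> x = Inr (U i) \<and> y = Inr (U j)) \<or>
     (\<exists>i\<in>{1..k-1}. x = Inr (U k) \<and> (y = Inr (W i) \<or> y = Inr (W' i))) \<or>
     (\<exists>i j. 1 \<le> i \<and> i < j \<and> j \<le> k - 1 \<and>
        ((x = Inr (W i) \<and> y = Inr (W j)) \<or> (x = Inr (W' i) \<and> y = Inr (W' j))))"

definition add_edges :: "nat \<Rightarrow> 'a \<Rightarrow> ('a \<Rightarrow> 'a \<Rightarrow> bool) \<Rightarrow> ('a + newv) \<Rightarrow> ('a + newv) \<Rightarrow> bool" where
  "add_edges k z E x y \<longleftrightarrow>
     (\<exists>a b. x = Inl a \<and> y = Inl b \<and> E a b) \<or> new_edge k z x y \<or> new_edge k z y x"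

fun add_coloring :: "('a \<Rightarrow> nat) \<Rightarrow> ('a + newv) \<Rightarrow> nat" where
  "add_coloring c (Inl v) = c v"
| "add_coloring c (Inr (U i)) = i"
| "add_coloring c (Inr (W i)) = i"
| "add_coloring c (Inr (W' i)) = i"

end

theory Submission
  imports Defs
begin

text \<open>Every closed neighbourhood of the enlarged graph splits as a disjoint sum of a part
  in G and a part among the new vertices. For an old vertex the new part is empty, except at
  z, where it is u_1, ..., u_k, one vertex of each colour; so balance is inherited from c.
  Every new vertex other than u_k sees exactly one vertex of each colour, and the closed
  neighbourhood of u_k, namely z, u_k and the v_i, v_i', contains exactly two of each colour.\<close>

definition new_vertices :: "nat \<Rightarrow> newv set" where
  "new_vertices k = U ` {1..k} \<union> W ` {1..k-1} \<union> W' ` {1..k-1}"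

lemma add_vertices_eq_Plus: "add_vertices k V = V <+> new_vertices k"
  unfolding add_vertices_def new_vertices_def Plus_def ..

lemma card_filter_Plus:
  assumes "finite A" "finite B"
  shows "card {x \<in> A <+> B. P x} = card {a \<in> A. P (Inl a)} + card {b \<in> B. P (Inr b)}"
proof -
  have "{x \<in> A <+> B. P x} = {a \<in> A. P (Inl a)} <+> {b \<in> B. P (Inr b)}"
    by auto
  then show ?thesis
    using assms by (simp add: card_Plus)
qed

lemma card_add_coloring_Plus:
  assumes "finite A" "finite B"
  shows "card {x \<in> A <+> B. add_coloring c x = i} =
    card {a \<in> A. c a = i} + card {y \<in> B. add_coloring c (Inr y) = i}"
  using card_filter_Plus[OF assms] by simp

lemma new_vertices_of_color:
  assumes "k \<ge> 2" "i \<in> {1..k}"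
  shows "{y \<in> new_vertices k. add_coloring c (Inr y) = i} =
    (if i = k then {U k} else {U i, W i, W' i})"
  using assms unfolding new_vertices_def by auto

lemma finite_closed_nbhd:
  assumes "simple_graph V E" "v \<in> V"
  shows "finite (closed_nbhd E v)"
proof (rule finite_subset)
  show "closed_nbhd E v \<subseteq> V" and "finite V"
    using assms unfolding simple_graph_def closed_nbhd_def by auto
qed

lemma cnb_coloringI:
  assumes "\<forall>v\<in>V. c v \<in> {1..k}"
    and "\<And>v i. v \<in> V \<Longrightarrow> i \<in> {1..k} \<Longrightarrow> card {u \<in> closed_nbhd E v. c u = i} = m v"
  shows "cnb_coloring V E k c"
  using assms unfolding cnb_coloring_def by simp

lemma closed_nbhd_add_edges_Inl:
  "closed_nbhd (add_edges k z E) (Inl v) =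
     closed_nbhd E v <+> (if v = z then U ` {1..k} else {})"
  unfolding closed_nbhd_def add_edges_def new_edge_def Plus_def by auto

lemma closed_nbhd_add_edges_U:
  assumes "1 \<le> j" "j < k"
  shows "closed_nbhd (add_edges k z E) (Inr (U j)) = {z} <+> U ` {1..k-1}"
  using assms unfolding closed_nbhd_def add_edges_def new_edge_def Plus_def
  by (auto elim!: newv.exhaust linorder_neqE_nat)

lemma closed_nbhd_add_edges_U_top:
  assumes "k \<ge> 2"
  shows "closed_nbhd (add_edges k z E) (Inr (U k)) =
     {z} <+> insert (U k) (W ` {1..k-1} \<union> W' ` {1..k-1})"
  using assms unfolding closed_nbhd_def add_edges_def new_edge_def Plus_def
  by (auto elim!: newv.exhaust)

lemma closed_nbhd_add_edges_W:
  assumes "1 \<le> j" "j < k"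
  shows "closed_nbhd (add_edges k z E) (Inr (W j)) = {} <+> insert (U k) (W ` {1..k-1})"
  using assms unfolding closed_nbhd_def add_edges_def new_edge_def Plus_def
  by (auto elim!: newv.exhaust linorder_neqE_nat)

lemma closed_nbhd_add_edges_W':
  assumes "1 \<le> j" "j < k"
  shows "closed_nbhd (add_edges k z E) (Inr (W' j)) = {} <+> insert (U k) (W' ` {1..k-1})"
  using assms unfolding closed_nbhd_def add_edges_def new_edge_def Plus_def
  by (auto elim!: newv.exhaust linorder_neqE_nat)

lemma card_closed_nbhd_add_edges_Inl:
  assumes "finite (closed_nbhd E v)" "i \<in> {1..k}"
  shows "card {u \<in> closed_nbhd (add_edges k z E) (Inl v). add_coloring c u = i} =
    card {u \<in> closed_nbhd E v. c u = i} + (if v = z then 1 else 0)"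
proof -
  have "{y \<in> U ` {1..k}. add_coloring c (Inr y) = i} = {U i}"
    using assms(2) by auto
  then show ?thesis
    using assms(1) by (simp add: closed_nbhd_add_edges_Inl card_add_coloring_Plus)
qed

lemma card_closed_nbhd_add_edges_Inr:
  assumes "k \<ge> 2" "c z = k" "y \<in> new_vertices k" "i \<in> {1..k}"
  shows "card {u \<in> closed_nbhd (add_edges k z E) (Inr y). add_coloring c u = i} =
    (if y = U k then 2 else 1)"
proof -
  have z_of_color: "{a \<in> {z}. c a = i} = (if i = k then {z} else {})"
    using assms(2) by auto
  show ?thesis
  proof (cases y)
    case (U j)
    show ?thesis
    proof (cases "j = k")
      case True
      have "{y \<in> insert (U k) (W ` {1..k-1} \<union> W' ` {1..k-1}). add_coloring c (Inr y) = i} =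
          (if i = k then {U k} else {W i, W' i})"
        using assms(4) by auto
      then show ?thesis
        using U True assms(1) z_of_color
        by (simp add: closed_nbhd_add_edges_U_top card_add_coloring_Plus)
    next
      case False
      then have "1 \<le> j" "j < k"
        using U assms(3) by (auto simp: new_vertices_def)
      moreover have "{y \<in> U ` {1..k-1}. add_coloring c (Inr y) = i} = (if i = k then {} else {U i})"
        using assms(4) by auto
      ultimately show ?thesis
        using U False z_of_color
        by (simp add: closed_nbhd_add_edges_U card_add_coloring_Plus)
    qed
  next
    case (W j)
    have "{y \<in> insert (U k) (W ` {1..k-1}). add_coloring c (Inr y) = i} =
        (if i = k then {U k} else {W i})"
      using assms(4) by auto
    then show ?thesis
      using W assms(3) by (auto simp: new_vertices_def closed_nbhd_add_edges_W card_add_coloring_Plus)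
  next
    case (W' j)
    have "{y \<in> insert (U k) (W' ` {1..k-1}). add_coloring c (Inr y) = i} =
        (if i = k then {U k} else {W' i})"
      using assms(4) by auto
    then show ?thesis
      using W' assms(3) by (auto simp: new_vertices_def closed_nbhd_add_edges_W' card_add_coloring_Plus)
  qed
qed

lemma card_add_vertices_of_color:
  assumes "k \<ge> 2" "finite V" "i \<in> {1..k}"
  shows "card {x \<in> add_vertices k V. add_coloring c x = i} =
    card {v \<in> V. c v = i} + (if i = k then 1 else 3)"
proof -
  have "finite (new_vertices k)"
    by (simp add: new_vertices_def)
  then show ?thesis
    using assms by (simp add: add_vertices_eq_Plus card_add_coloring_Plus new_vertices_of_color)
qed

lemma cnb_coloring_add_coloring:
  assumes "k \<ge> 2" "simple_graph V E" "cnb_coloring V E k c" "c z = k"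
  shows "cnb_coloring (add_vertices k V) (add_edges k z E) k (add_coloring c)"
proof -
  have "k \<in> {1..k}"
    using assms(1) by simp
  then have colors: "\<forall>v\<in>V. c v \<in> {1..k}"
    and balanced: "\<And>v i. v \<in> V \<Longrightarrow> i \<in> {1..k} \<Longrightarrow>
      card {u \<in> closed_nbhd E v. c u = i} = card {u \<in> closed_nbhd E v. c u = k}"
    using assms(3) unfolding cnb_coloring_def by blast+
  let ?m = "case_sum (\<lambda>v. card {u \<in> closed_nbhd E v. c u = k} + (if v = z then 1 else 0))
    (\<lambda>y. if y = U k then 2 else 1)"
  show ?thesis
  proof (rule cnb_coloringI[where m = ?m])
    show "\<forall>x\<in>add_vertices k V. add_coloring c x \<in> {1..k}"
      using colors unfolding add_vertices_def by auto
  next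
    fix x i assume "x \<in> add_vertices k V" and i: "i \<in> {1..k}"
    then consider (old) v where "x = Inl v" "v \<in> V" | (new) y where "x = Inr y" "y \<in> new_vertices k"
      unfolding add_vertices_eq_Plus by blast
    then show "card {u \<in> closed_nbhd (add_edges k z E) x. add_coloring c u = i} = ?m x"
    proof cases
      case old
      then show ?thesis
        using balanced[OF old(2) i] finite_closed_nbhd[OF assms(2) old(2)] i
        by (simp add: card_closed_nbhd_add_edges_Inl)
    next
      case new
      then show ?thesis
        using i assms(1,4) by (simp add: card_closed_nbhd_add_edges_Inr)
    qed
  qed
qed

theorem proposition2p13:
  fixes V :: "'a set" and E :: "'a \<Rightarrow> 'a \<Rightarrow> bool" and c :: "'a \<Rightarrow> nat"
    and k :: nat and z :: 'a
  assumes "k \<ge> 2"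
    and "simple_graph V E"
    and "cnb_coloring V E k c"
    and "z \<in> V" and "c z = k"
  shows "cnb_coloring (add_vertices k V) (add_edges k z E) k (add_coloring c)
    \<and> card {x \<in> add_vertices k V. add_coloring c x = k} = card {v \<in> V. c v = k} + 1
    \<and> (\<forall>i\<in>{1..k-1}. card {x \<in> add_vertices k V. add_coloring c x = i}
                       = card {v \<in> V. c v = i} + 3)"
proof -
  have "finite V"
    using assms(2) by (simp add: simple_graph_def)
  then show ?thesis
    using assms(1) cnb_coloring_add_coloring[OF assms(1,2,3,5)]
      card_add_vertices_of_color[of k V _ c]
    by auto
qed

end
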